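(* (i) Let $J:\tilde{\mathcal{A}}_{\mathbf{k}_0}\to\tilde{\mathcal{A}}_{\mathbf{k}_0}$ be a linear map for which there are complex numbers $c_{\mathbf{j};\mathbf{p}}$ ($\mathbf{j}\ge\mathbf{k}_0$, $\mathbf{p}\in\mathbb{N}^M\setminus\{\mathbf 0\}$) such that for every $\tilde S\in\tilde{\mathcal{A}}_{\mathbf{k}_0}$ and every representation $\tilde S=\sum_{\mathbf{j}\ge\mathbf{k}_0}c_{\mathbf{j}}\mu_{\mathbf{j}}$ one has $J\tilde S=\sum_{\mathbf{j}\ge\mathbf{k}_0}c_{\mathbf{j}}\sum_{\mathbf{p}\in\mathbb{N}^M\setminus\{0\}}c_{\mathbf{j};\mathbf{p}}\mu_{\mathbf{j}+\mathbf{p}}$. Then for every $\tilde S_0\in\tilde{\mathcal{A}}_{\mathbf{k}_0}$ the equation $\tilde S=J\tilde S+\tilde S_0$ has a unique solution $\tilde S\in\tilde{\mathcal{A}}_{\mathbf{k}_0}$. (ii) Let $A\subset\tilde{\mathcal{A}}_{\mathbf{k}_0}$ be nonempty and closed in the asymptotic topology, and let $J:A\to A$ (linear or not) be asymptotically contractive on $A$. Then the equation $\tilde S=J(\tilde S)$ has a unique solution $\tilde S\in A$.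
   Context: $(\mathcal{G},\cdot,\le)$ is a totally ordered abelian group (order compatible with multiplication). Fix $M\ge1$, $\mu_1,\dots,\mu_M\in\mathcal{G}$ with $\mu_i<1$, $\mu_{\mathbf{k}}=\prod_i\mu_i^{k_i}$ for $\mathbf{k}\in\mathbb{Z}^M$; $\mathbb{Z}^M$ has the componentwise order. For $\mathbf{k}_0\in\mathbb{Z}^M$, $\tilde{\mathcal{A}}_{\mathbf{k}_0}$ is the set of formal sums $\sum_{\mathbf{k}\ge\mathbf{k}_0}c_{\mathbf{k}}\mu_{\mathbf{k}}$ ($c_{\mathbf{k}}\in\mathbb{C}$), two formal sums being identified iff for each $g\in\mathcal{G}$ the finite sums $\sum_{\mathbf{k}\ge\mathbf{k}_0,\mu_{\mathbf{k}}=g}c_{\mathbf{k}}$ coincide (the coefficient of $g$); addition is coefficientwise. A formal expression $\sum_{\mathbf{k}\ge\mathbf{k}_0}\sum_{\mathbf{p}\in\mathbb{N}^M\setminus\{0\}}a_{\mathbf{k},\mathbf{p}}\mu_{\mathbf{k}+\mathbf{p}}$ denotes the element whose coefficient of $g$ is the (finite) sum of $a_{\mathbf{k},\mathbf{p}}$ over $\mu_{\mathbf{k}+\mathbf{p}}=g$. Asymptotic topology: a sequence converges iff for each $g\in\mathcal{G}$ its coefficient of $g$ is eventually constant; closed means sequentially closed. A map $J:A\to A$ is asymptotically contractive on $A$ if for all $f_1,f_2\in A$ and every representation $f_1-f_2=\sum_{\mathbf{k}\ge\mathbf{k}_0}c_{\mathbf{k}}\mu_{\mathbf{k}}$ there exist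 complex numbers $C_{\mathbf{k};\mathbf{p}}$ ($\mathbf{k}\ge\mathbf{k}_0$, $\mathbf{p}\in\mathbb{N}^M\setminus\{0\}$), possibly depending on $f_1,f_2$, such that $J(f_1)-J(f_2)=\sum_{\mathbf{k}\ge\mathbf{k}_0}c_{\mathbf{k}}\sum_{\mathbf{p}\in\mathbb{N}^M\setminus\{0\}}C_{\mathbf{k};\mathbf{p}}\mu_{\mathbf{k}+\mathbf{p}}$. *)

theory Defs
  imports Complex_Main
begin

text \<open>The totally ordered abelian group is written additively (type class
  linordered_ab_group_add): the paper's product is our +, its unit 1 is our 0,
  and mu_k = prod mu_i^(k_i) becomes sum of k_i times mu_i.
  Indices: Z^M is 'i \<Rightarrow> int for a finite (nonempty) index type 'i,
  with the pointwise (componentwise) order on functions.\<close>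

definition zmul :: "int \<Rightarrow> 'g::ab_group_add \<Rightarrow> 'g" where
  "zmul n x = (if 0 \<le> n then (\<Sum>_\<in>{..<nat n}. x) else - (\<Sum>_\<in>{..<nat (- n)}. x))"

definition muk :: "('i::finite \<Rightarrow> 'g::linordered_ab_group_add) \<Rightarrow> ('i \<Rightarrow> int) \<Rightarrow> 'g" where
  "muk \<mu> k = (\<Sum>i\<in>UNIV. zmul (k i) (\<mu> i))"

definition fsum :: "('i::finite \<Rightarrow> 'g::linordered_ab_group_add) \<Rightarrow> ('i \<Rightarrow> int)
    \<Rightarrow> (('i \<Rightarrow> int) \<Rightarrow> complex) \<Rightarrow> 'g \<Rightarrow> complex" where
  "fsum \<mu> k0 c g = (\<Sum>k | k0 \<le> k \<and> muk \<mu> k = g. c k)"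

definition fsum2 :: "('i::finite \<Rightarrow> 'g::linordered_ab_group_add) \<Rightarrow> ('i \<Rightarrow> int)
    \<Rightarrow> (('i \<Rightarrow> int) \<Rightarrow> ('i \<Rightarrow> int) \<Rightarrow> complex) \<Rightarrow> 'g \<Rightarrow> complex" where
  "fsum2 \<mu> k0 a g = (\<Sum>(k, p) | k0 \<le> k \<and> (\<forall>i. 0 \<le> p i) \<and> (\<exists>i. p i \<noteq> 0) \<and> muk \<mu> (\<lambda>i. k i + p i) = g. a k p)"

definition Atilde :: "('i::finite \<Rightarrow> 'g::linordered_ab_group_add) \<Rightarrow> ('i \<Rightarrow> int)
    \<Rightarrow> ('g \<Rightarrow> complex) set" where
  "Atilde \<mu> k0 = {f. \<exists>c. f = fsum \<mu> k0 c}"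

definition asym_conv :: "(nat \<Rightarrow> 'g \<Rightarrow> complex) \<Rightarrow> ('g \<Rightarrow> complex) \<Rightarrow> bool" where
  "asym_conv F f \<longleftrightarrow> (\<forall>g. \<exists>N. \<forall>n\<ge>N. F n g = f g)"

definition asym_closed :: "('g \<Rightarrow> complex) set \<Rightarrow> bool" where
  "asym_closed A \<longleftrightarrow> (\<forall>F f. (\<forall>n. F n \<in> A) \<and> asym_conv F f \<longrightarrow> f \<in> A)"

definition asym_contractive :: "('i::finite \<Rightarrow> 'g::linordered_ab_group_add) \<Rightarrow> ('i \<Rightarrow> int)
    \<Rightarrow> ('g \<Rightarrow> complex) set \<Rightarrow> (('g \<Rightarrow> complex) \<Rightarrow> ('g \<Rightarrow> complex)) \<Rightarrow> bool" where
  "asym_contractive \<mu> k0 A J \<longleftrightarrow>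
     (\<forall>f1\<in>A. \<forall>f2\<in>A. \<forall>c. (\<lambda>g. f1 g - f2 g) = fsum \<mu> k0 c \<longrightarrow>
        (\<exists>C. (\<lambda>g. J f1 g - J f2 g) = fsum2 \<mu> k0 (\<lambda>k p. c k * C k p)))"

definition clinear_on :: "('g \<Rightarrow> complex) set \<Rightarrow> (('g \<Rightarrow> complex) \<Rightarrow> ('g \<Rightarrow> complex)) \<Rightarrow> bool" where
  "clinear_on S J \<longleftrightarrow> (\<forall>f\<in>S. \<forall>h\<in>S. \<forall>a b::complex.
      J (\<lambda>g. a * f g + b * h g) = (\<lambda>g. a * J f g + b * J h g))"

end

theory Submission imports Defs begin

text \<open>Since every \<open>\<mu>\<^sub>i\<close> is negative, \<open>\<mu>\<^sub>k\<close> strictly decreases along the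
  componentwise order, so the indices \<open>k \<ge> k0\<close> with \<open>\<mu>\<^sub>k = g\<close> form an antichain
  bounded below, hence a finite set, and the level \<open>\<Sum>\<^sub>i (k\<^sub>i - k0\<^sub>i)\<close> is bounded on it.
  An asymptotically contractive map raises the least level occurring in a difference by
  at least one. Therefore the Picard iterates have coefficients that stabilise at each
  \<open>g\<close>; their asymptotic limit lies in the closed set \<open>A\<close> and is a fixed point, and two
  fixed points differ only at arbitrarily high levels, that is, nowhere. Part (i) is
  part (ii) for the map \<open>S \<mapsto> J S + S0\<close> on the whole space.\<close>

lemma zmul_add_one: "zmul (n + 1) x = zmul n x + x"
proof (cases "0 \<le> n")
  case True
  then have "nat (n + 1) = Suc (nat n)" by simp
  with True show ?thesis by (simp add: zmul_def)
next
  case False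
  then have "nat (- n) = Suc (nat (- (n + 1)))" by simp
  with False show ?thesis by (auto simp add: zmul_def)
qed

lemma zmul_strict_antimono:
  fixes x :: "'g::linordered_ab_group_add"
  assumes "x < 0" and "a < b"
  shows "zmul b x < zmul a x"
proof -
  from \<open>a < b\<close> have "a + 1 \<le> b" by simp
  then show ?thesis
  proof (induction b rule: int_ge_induct)
    case base
    show ?case using zmul_add_one[of a x] \<open>x < 0\<close> by simp
  next
    case (step i)
    have "zmul (i + 1) x < zmul i x" using zmul_add_one[of i x] \<open>x < 0\<close> by simp
    with step.IH show ?case by order
  qed
qed

lemma zmul_antimono:
  fixes x :: "'g::linordered_ab_group_add"
  assumes "x < 0" and "a \<le> b"
  shows "zmul b x \<le> zmul a x"
  using zmul_strict_antimono[OF \<open>x < 0\<close>, of a b] \<open>a \<le> b\<close> by (cases "a = b") auto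

lemma muk_strict_antimono:
  assumes neg: "\<forall>i. \<mu> i < 0" and "k < k'"
  shows "muk \<mu> k' < muk \<mu> k"
  unfolding muk_def
proof (rule sum_strict_mono_ex1)
  show "\<forall>i\<in>UNIV. zmul (k' i) (\<mu> i) \<le> zmul (k i) (\<mu> i)"
    using \<open>k < k'\<close> neg by (auto simp: less_fun_def le_fun_def intro: zmul_antimono)
  obtain j where "k j < k' j"
    using \<open>k < k'\<close> by (auto simp: less_fun_def le_fun_def not_le)
  then show "\<exists>i\<in>UNIV. zmul (k' i) (\<mu> i) < zmul (k i) (\<mu> i)"
    using zmul_strict_antimono neg by blast
qed simp

text \<open>Any \<open>b \<noteq> a\<close> in the antichain lies below \<open>a\<close> in some coordinate \<open>i\<close>, which leaves
  finitely many values for \<open>b i\<close>; fixing one of them frees one coordinate less.\<close>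
lemma finite_antichain_bounded_below:
  fixes A :: "('i \<Rightarrow> int) set"
  assumes "finite I" and "\<forall>b\<in>A. \<forall>i. k0 i \<le> b i" and "\<forall>b\<in>A. \<forall>i. i \<notin> I \<longrightarrow> b i = z i"
    and "\<forall>a\<in>A. \<forall>b\<in>A. a \<le> b \<longrightarrow> a = b"
  shows "finite A"
  using assms
proof (induction "card I" arbitrary: I A z rule: less_induct)
  case less
  show ?case
  proof (cases "A = {}")
    case False
    then obtain a where a: "a \<in> A" by blast
    define slice where "slice i v = {b\<in>A. b i = v}" for i v
    have cover: "A \<subseteq> insert a (\<Union>i\<in>I. \<Union>v\<in>{k0 i..<a i}. slice i v)"
    proof
      fix b assume b: "b \<in> A"
      show "b \<in> insert a (\<Union>i\<in>I. \<Union>v\<in>{k0 i..<a i}. slice i v)"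
      proof (cases "b = a")
        case False
        then have "\<not> a \<le> b" using less.prems(4) a b by blast
        then obtain i where i: "\<not> a i \<le> b i" by (auto simp: le_fun_def)
        then have "i \<in> I" using less.prems(3) a b by (metis order_refl)
        with i b less.prems(2) show ?thesis by (fastforce simp: slice_def)
      qed simp
    qed
    have "finite (slice i v)" if "i \<in> I" for i v
    proof -
      have "card (I - {i}) < card I" using that less.prems(1) by (metis card_Diff1_less)
      then show ?thesis
        by (rule less.hyps[where z = "z(i := v)"]) (use less.prems that in \<open>auto simp: slice_def\<close>)
    qed
    with cover less.prems(1) show ?thesis
      by (meson finite_UN_I finite_atLeastLessThan_int finite_insert finite_subset)
  qed simp
qed

lemma finite_muk_fibre:
  assumes "\<forall>i. \<mu> i < 0"
  shows "finite {k. k0 \<le> k \<and> muk \<mu> k = g}"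
proof (rule finite_antichain_bounded_below[of UNIV _ k0])
  show "\<forall>a\<in>{k. k0 \<le> k \<and> muk \<mu> k = g}. \<forall>b\<in>{k. k0 \<le> k \<and> muk \<mu> k = g}. a \<le> b \<longrightarrow> a = b"
  proof (intro ballI impI)
    fix a b assume a: "a \<in> {k. k0 \<le> k \<and> muk \<mu> k = g}" and b: "b \<in> {k. k0 \<le> k \<and> muk \<mu> k = g}"
      and "a \<le> b"
    show "a = b"
    proof (rule ccontr)
      assume "a \<noteq> b"
      with \<open>a \<le> b\<close> have "muk \<mu> b < muk \<mu> a" by (simp add: muk_strict_antimono[OF assms])
      with a b show False by simp
    qed
  qed
qed (auto simp: le_fun_def)

definition level :: "('i::finite \<Rightarrow> int) \<Rightarrow> ('i \<Rightarrow> int) \<Rightarrow> nat" where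
  "level k0 k = (\<Sum>i\<in>UNIV. nat (k i - k0 i))"

definition level_ge :: "('i::finite \<Rightarrow> 'g::linordered_ab_group_add) \<Rightarrow> ('i \<Rightarrow> int) \<Rightarrow> nat
    \<Rightarrow> ('g \<Rightarrow> complex) \<Rightarrow> bool" where
  "level_ge \<mu> k0 n d \<longleftrightarrow> (\<forall>g. d g \<noteq> 0 \<longrightarrow> (\<exists>k. k0 \<le> k \<and> n \<le> level k0 k \<and> muk \<mu> k = g))"

text \<open>\<open>Max {}\<close> is unspecified, which is harmless: an empty fibre carries no coefficient.\<close>
definition depth :: "('i::finite \<Rightarrow> 'g::linordered_ab_group_add) \<Rightarrow> ('i \<Rightarrow> int) \<Rightarrow> 'g \<Rightarrow> nat" where
  "depth \<mu> k0 g = Suc (Max (level k0 ` {k. k0 \<le> k \<and> muk \<mu> k = g}))"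

lemma level_strict_mono:
  assumes "k0 \<le> k" and "\<forall>i. 0 \<le> p i" and "\<exists>i. p i \<noteq> 0"
  shows "level k0 k < level k0 (\<lambda>i. k i + p i)"
  unfolding level_def
proof (rule sum_strict_mono_ex1)
  show "\<forall>i\<in>UNIV. nat (k i - k0 i) \<le> nat (k i + p i - k0 i)"
    using assms(2) by (simp add: nat_mono)
  obtain j where "p j \<noteq> 0" using assms(3) by blast
  moreover have "0 \<le> p j" "k0 j \<le> k j" using assms(1,2) by (auto simp: le_fun_def)
  ultimately have "nat (k j - k0 j) < nat (k j + p j - k0 j)" by linarith
  then show "\<exists>i\<in>UNIV. nat (k i - k0 i) < nat (k i + p i - k0 i)" by blast
qed simp

lemma level_ge_antimono: "level_ge \<mu> k0 n d \<Longrightarrow> m \<le> n \<Longrightarrow> level_ge \<mu> k0 m d"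
  unfolding level_ge_def by (meson order_trans)

lemma level_ge_add:
  "level_ge \<mu> k0 n d1 \<Longrightarrow> level_ge \<mu> k0 n d2 \<Longrightarrow> level_ge \<mu> k0 n (\<lambda>g. d1 g + d2 g)"
  unfolding level_ge_def by (metis add_0)

lemma level_ge_diff:
  "level_ge \<mu> k0 n d1 \<Longrightarrow> level_ge \<mu> k0 n d2 \<Longrightarrow> level_ge \<mu> k0 n (\<lambda>g. d1 g - d2 g)"
  unfolding level_ge_def by (metis diff_zero)

lemma level_ge_asym_limit:
  assumes "asym_conv F f" and "\<forall>m\<ge>N. level_ge \<mu> k0 n (F m)"
  shows "level_ge \<mu> k0 n f"
  unfolding level_ge_def
proof (intro allI impI)
  fix g assume "f g \<noteq> 0"
  obtain N' where "\<forall>m\<ge>N'. F m g = f g" using assms(1) unfolding asym_conv_def by blast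
  then have "F (max N N') g \<noteq> 0" using \<open>f g \<noteq> 0\<close> by simp
  then show "\<exists>k. k0 \<le> k \<and> n \<le> level k0 k \<and> muk \<mu> k = g"
    using assms(2) max.cobounded1 unfolding level_ge_def by blast
qed

lemma level_ge_vanishes:
  assumes "\<forall>i. \<mu> i < 0" and "level_ge \<mu> k0 n d" and "depth \<mu> k0 g \<le> n"
  shows "d g = 0"
proof (rule ccontr)
  assume "d g \<noteq> 0"
  then obtain k where k: "k0 \<le> k" "n \<le> level k0 k" "muk \<mu> k = g"
    using assms(2) unfolding level_ge_def by blast
  have "level k0 k \<le> Max (level k0 ` {k. k0 \<le> k \<and> muk \<mu> k = g})"
    using finite_muk_fibre[OF assms(1)] k by (intro Max_ge) auto
  with k(2) assms(3) show False unfolding depth_def by simp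
qed

lemma eq_if_level_ge_all:
  assumes "\<forall>i. \<mu> i < 0" and "\<forall>n. level_ge \<mu> k0 n (\<lambda>g. f1 g - f2 g)"
  shows "f1 = f2"
proof
  fix g
  show "f1 g = f2 g"
    using level_ge_vanishes[OF assms(1) assms(2)[rule_format, of "depth \<mu> k0 g"]] by simp
qed

lemma level_ge_telescope:
  assumes "\<forall>j. level_ge \<mu> k0 j (\<lambda>g. F (Suc j) g - F j g)" and "n \<le> m"
  shows "level_ge \<mu> k0 n (\<lambda>g. F m g - F n g)"
  using \<open>n \<le> m\<close>
proof (induction m rule: dec_induct)
  case base
  show ?case by (simp add: level_ge_def)
next
  case (step m)
  have "level_ge \<mu> k0 n (\<lambda>g. F (Suc m) g - F m g)"
    using assms(1) \<open>n \<le> m\<close> level_ge_antimono by blast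
  from level_ge_add[OF this step.IH] show ?case by simp
qed

lemma level_ge_0_fsum: "level_ge \<mu> k0 0 (fsum \<mu> k0 c)"
  unfolding level_ge_def
proof (intro allI impI)
  fix g assume "fsum \<mu> k0 c g \<noteq> 0"
  then obtain k where "k \<in> {k. k0 \<le> k \<and> muk \<mu> k = g}"
    unfolding fsum_def by (meson sum.not_neutral_contains_not_neutral)
  then show "\<exists>k. k0 \<le> k \<and> 0 \<le> level k0 k \<and> muk \<mu> k = g" by auto
qed

text \<open>Each \<open>g\<close> in the support gets its coefficient from one chosen index of level \<open>\<ge> n\<close>.\<close>
lemma level_ge_obtain_fsum:
  assumes neg: "\<forall>i. \<mu> i < 0" and "level_ge \<mu> k0 n d"
  obtains c where "d = fsum \<mu> k0 c" and "\<forall>k. c k \<noteq> 0 \<longrightarrow> n \<le> level k0 k"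
proof -
  define P where "P g k \<longleftrightarrow> k0 \<le> k \<and> n \<le> level k0 k \<and> muk \<mu> k = g" for g k
  define c where "c k = (if n \<le> level k0 k \<and> k = (SOME k'. P (muk \<mu> k) k') then d (muk \<mu> k) else 0)"
    for k
  have "d g = fsum \<mu> k0 c g" for g
  proof (cases "\<exists>k. P g k")
    case True
    define ks where "ks = (SOME k. P g k)"
    have ks: "P g ks" using True someI_ex unfolding ks_def by metis
    have "c k = (if k = ks then d g else 0)" if "k0 \<le> k \<and> muk \<mu> k = g" for k
      using that ks unfolding c_def ks_def P_def by auto
    then have "fsum \<mu> k0 c g = (\<Sum>k | k0 \<le> k \<and> muk \<mu> k = g. if k = ks then d g else 0)"
      unfolding fsum_def by (intro sum.cong) auto
    also have "\<dots> = d g" using finite_muk_fibre[OF neg, of k0 g] ks unfolding P_def by simp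
    finally show ?thesis by simp
  next
    case False
    then have "d g = 0" using \<open>level_ge \<mu> k0 n d\<close> unfolding level_ge_def P_def by blast
    moreover have "c k = 0" if "k0 \<le> k \<and> muk \<mu> k = g" for k
      using False that unfolding c_def P_def by auto
    ultimately show ?thesis unfolding fsum_def by simp
  qed
  then have "d = fsum \<mu> k0 c" by blast
  moreover have "\<forall>k. c k \<noteq> 0 \<longrightarrow> n \<le> level k0 k" unfolding c_def by auto
  ultimately show ?thesis using that by blast
qed

lemma Atilde_eq_level_ge_0:
  assumes "\<forall>i. \<mu> i < 0"
  shows "Atilde \<mu> k0 = {d. level_ge \<mu> k0 0 d}"
  using level_ge_0_fsum level_ge_obtain_fsum[OF assms] unfolding Atilde_def by blast

lemma asym_closed_Atilde:
  assumes "\<forall>i. \<mu> i < 0"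
  shows "asym_closed (Atilde \<mu> k0)"
  unfolding asym_closed_def Atilde_eq_level_ge_0[OF assms]
  using level_ge_asym_limit[where N = 0] by blast

lemma asym_contractive_level_ge_Suc:
  assumes neg: "\<forall>i. \<mu> i < 0" and J: "asym_contractive \<mu> k0 A J"
    and "f1 \<in> A" "f2 \<in> A" and "level_ge \<mu> k0 n (\<lambda>g. f1 g - f2 g)"
  shows "level_ge \<mu> k0 (Suc n) (\<lambda>g. J f1 g - J f2 g)"
proof -
  obtain c where c: "(\<lambda>g. f1 g - f2 g) = fsum \<mu> k0 c" "\<forall>k. c k \<noteq> 0 \<longrightarrow> n \<le> level k0 k"
    using level_ge_obtain_fsum[OF neg assms(5)] by blast
  obtain C where C: "(\<lambda>g. J f1 g - J f2 g) = fsum2 \<mu> k0 (\<lambda>k p. c k * C k p)"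
    using J c(1) \<open>f1 \<in> A\<close> \<open>f2 \<in> A\<close> unfolding asym_contractive_def by blast
  show ?thesis
    unfolding level_ge_def
  proof (intro allI impI)
    fix g assume "J f1 g - J f2 g \<noteq> 0"
    then have "fsum2 \<mu> k0 (\<lambda>k p. c k * C k p) g \<noteq> 0" using C by metis
    then obtain x where x: "x \<in> {(k, p). k0 \<le> k \<and> (\<forall>i. 0 \<le> p i) \<and> (\<exists>i. p i \<noteq> 0) \<and>
        muk \<mu> (\<lambda>i. k i + p i) = g}" "(case x of (k, p) \<Rightarrow> c k * C k p) \<noteq> 0"
      unfolding fsum2_def by (meson sum.not_neutral_contains_not_neutral)
    obtain k p where "x = (k, p)" by fastforce
    with x have kp: "k0 \<le> k" "\<forall>i. 0 \<le> p i" "\<exists>i. p i \<noteq> 0"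
      "muk \<mu> (\<lambda>i. k i + p i) = g" "c k \<noteq> 0" by auto
    have "n < level k0 (\<lambda>i. k i + p i)"
      using c(2) kp(5) level_strict_mono[OF kp(1-3)] by (meson le_less_trans)
    moreover have "k0 \<le> (\<lambda>i. k i + p i)" using kp(1,2) by (auto simp: le_fun_def add_increasing2)
    ultimately show "\<exists>k. k0 \<le> k \<and> Suc n \<le> level k0 k \<and> muk \<mu> k = g" using kp(4) by force
  qed
qed

lemma funpow_in_invariant_set: "f ` A \<subseteq> A \<Longrightarrow> x \<in> A \<Longrightarrow> (f ^^ n) x \<in> A"
  by (induction n) auto

lemma asym_contractive_level_ge_funpow:
  assumes neg: "\<forall>i. \<mu> i < 0" and A: "A \<subseteq> Atilde \<mu> k0" "J ` A \<subseteq> A"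
    and J: "asym_contractive \<mu> k0 A J" and "f1 \<in> A" "f2 \<in> A"
  shows "level_ge \<mu> k0 n (\<lambda>g. (J ^^ n) f1 g - (J ^^ n) f2 g)"
proof (induction n)
  case 0
  have "f1 \<in> Atilde \<mu> k0" "f2 \<in> Atilde \<mu> k0" using A(1) \<open>f1 \<in> A\<close> \<open>f2 \<in> A\<close> by auto
  then show ?case using level_ge_diff unfolding Atilde_eq_level_ge_0[OF neg] by auto
next
  case (Suc n)
  then show ?case
    using asym_contractive_level_ge_Suc[OF neg J] funpow_in_invariant_set[OF A(2)] \<open>f1 \<in> A\<close> \<open>f2 \<in> A\<close>
    by simp
qed

lemma asym_contractive_fixpoint_unique:
  assumes neg: "\<forall>i. \<mu> i < 0" and A: "A \<subseteq> Atilde \<mu> k0" "J ` A \<subseteq> A"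
    and J: "asym_contractive \<mu> k0 A J"
    and S1: "S1 \<in> A" "J S1 = S1" and S2: "S2 \<in> A" "J S2 = S2"
  shows "S1 = S2"
proof (rule eq_if_level_ge_all[OF neg], intro allI)
  fix n
  have "(J ^^ n) S = S" if "J S = S" for S
    using that by (induction n) simp_all
  then show "level_ge \<mu> k0 n (\<lambda>g. S1 g - S2 g)"
    using asym_contractive_level_ge_funpow[OF neg A J S1(1) S2(1), of n] S1(2) S2(2) by simp
qed

lemma asym_contractive_has_fixpoint:
  assumes neg: "\<forall>i. \<mu> i < 0"
    and A: "A \<subseteq> Atilde \<mu> k0" "A \<noteq> {}" "asym_closed A" "J ` A \<subseteq> A"
    and J: "asym_contractive \<mu> k0 A J"
  obtains S where "S \<in> A" and "J S = S"
proof -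
  obtain S0 where S0: "S0 \<in> A" using A(2) by blast
  define F where "F n = (J ^^ n) S0" for n
  have FA: "F n \<in> A" for n
    unfolding F_def using funpow_in_invariant_set[OF A(4) S0] .
  have "level_ge \<mu> k0 j (\<lambda>g. F (Suc j) g - F j g)" for j
    using asym_contractive_level_ge_funpow[OF neg A(1,4) J, of "J S0" S0 j] S0 A(4)
    by (auto simp: F_def funpow_swap1)
  then have F_close: "level_ge \<mu> k0 n (\<lambda>g. F m g - F n g)" if "n \<le> m" for n m
    using level_ge_telescope that by blast
  define f where "f g = F (depth \<mu> k0 g) g" for g
  have "F m g = f g" if "depth \<mu> k0 g \<le> m" for m g
    using level_ge_vanishes[OF neg F_close[OF that]] unfolding f_def by simp
  then have conv: "asym_conv F f" unfolding asym_conv_def by blast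
  with A(3) FA have "f \<in> A" unfolding asym_closed_def by blast
  have f_close: "level_ge \<mu> k0 n (\<lambda>g. f g - F n g)" for n
  proof (rule level_ge_asym_limit)
    show "asym_conv (\<lambda>m g. F m g - F n g) (\<lambda>g. f g - F n g)"
      using conv unfolding asym_conv_def by simp
  qed (use F_close in blast)
  have "level_ge \<mu> k0 (Suc n) (\<lambda>g. f g - J f g)" for n
  proof -
    have "level_ge \<mu> k0 (Suc n) (\<lambda>g. J f g - J (F n) g)"
      using asym_contractive_level_ge_Suc[OF neg J \<open>f \<in> A\<close> FA f_close] .
    from level_ge_diff[OF f_close[of "Suc n"] this] show ?thesis by (simp add: F_def)
  qed
  then have "\<forall>n. level_ge \<mu> k0 n (\<lambda>g. f g - J f g)"
    by (meson level_ge_antimono le_SucI order_refl)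
  then have "f = J f" by (rule eq_if_level_ge_all[OF neg])
  with \<open>f \<in> A\<close> show ?thesis using that by simp
qed

lemma asym_contractive_unique_fixpoint:
  assumes "\<forall>i. \<mu> i < 0"
    and "A \<subseteq> Atilde \<mu> k0" "A \<noteq> {}" "asym_closed A" "J ` A \<subseteq> A"
    and "asym_contractive \<mu> k0 A J"
  shows "\<exists>!S. S \<in> A \<and> S = J S"
proof -
  obtain S where S: "S \<in> A" "J S = S" by (rule asym_contractive_has_fixpoint[OF assms])
  have "S' = S" if "S' \<in> A" "S' = J S'" for S'
    using asym_contractive_fixpoint_unique[OF assms(1,2,5,6) that(1) that(2)[symmetric] S] .
  show ?thesis
  proof (rule ex1I[of _ S])
    show "S \<in> A \<and> S = J S" using S by simp
  qed (use \<open>\<And>S'. S' \<in> A \<Longrightarrow> S' = J S' \<Longrightarrow> S' = S\<close> in blast)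
qed

lemma clinear_on_diff:
  assumes "clinear_on S J" and "f \<in> S" "h \<in> S"
  shows "J (\<lambda>g. f g - h g) = (\<lambda>g. J f g - J h g)"
proof -
  have "J (\<lambda>g. 1 * f g + (- 1) * h g) = (\<lambda>g. 1 * J f g + (- 1) * J h g)"
    using assms unfolding clinear_on_def by blast
  then show ?thesis by simp
qed

lemma affine_equation_unique_solution:
  assumes neg: "\<forall>i. \<mu> i < 0"
    and J: "J ` Atilde \<mu> k0 \<subseteq> Atilde \<mu> k0" "clinear_on (Atilde \<mu> k0) J"
      "\<forall>c. J (fsum \<mu> k0 c) = fsum2 \<mu> k0 (\<lambda>j p. c j * C j p)"
    and S0: "S0 \<in> Atilde \<mu> k0"
  shows "\<exists>!S. S \<in> Atilde \<mu> k0 \<and> S = (\<lambda>g. J S g + S0 g)"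
proof (rule asym_contractive_unique_fixpoint[OF neg order_refl])
  show "Atilde \<mu> k0 \<noteq> {}" unfolding Atilde_def by blast
  show "asym_closed (Atilde \<mu> k0)" by (rule asym_closed_Atilde[OF neg])
  show "(\<lambda>S g. J S g + S0 g) ` Atilde \<mu> k0 \<subseteq> Atilde \<mu> k0"
    using J(1) S0 level_ge_add unfolding Atilde_eq_level_ge_0[OF neg] by blast
  show "asym_contractive \<mu> k0 (Atilde \<mu> k0) (\<lambda>S g. J S g + S0 g)"
    unfolding asym_contractive_def
  proof (intro ballI allI impI)
    fix f1 f2 c
    assume f: "f1 \<in> Atilde \<mu> k0" "f2 \<in> Atilde \<mu> k0" and diff: "(\<lambda>g. f1 g - f2 g) = fsum \<mu> k0 c"
    have "(\<lambda>g. J f1 g - J f2 g) = J (\<lambda>g. f1 g - f2 g)"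
      by (rule clinear_on_diff[OF J(2) f, symmetric])
    also have "\<dots> = J (fsum \<mu> k0 c)" by (simp only: diff)
    also have "\<dots> = fsum2 \<mu> k0 (\<lambda>k p. c k * C k p)" using J(3) by blast
    finally have "(\<lambda>g. J f1 g - J f2 g) = fsum2 \<mu> k0 (\<lambda>k p. c k * C k p)" .
    then show "\<exists>C. (\<lambda>g. (J f1 g + S0 g) - (J f2 g + S0 g)) = fsum2 \<mu> k0 (\<lambda>k p. c k * C k p)"
      by auto
  qed
qed

theorem mainTheorem6:
  fixes \<mu> :: "'i::finite \<Rightarrow> 'g::linordered_ab_group_add"
    and k0 :: "'i \<Rightarrow> int"
  assumes "\<forall>i. \<mu> i < 0"
  shows "(\<forall>J. J ` Atilde \<mu> k0 \<subseteq> Atilde \<mu> k0 \<and> clinear_on (Atilde \<mu> k0) J \<and>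
            (\<exists>C. \<forall>c. J (fsum \<mu> k0 c) = fsum2 \<mu> k0 (\<lambda>j p. c j * C j p)) \<longrightarrow>
            (\<forall>S0\<in>Atilde \<mu> k0. \<exists>!S. S \<in> Atilde \<mu> k0 \<and> S = (\<lambda>g. J S g + S0 g)))
       \<and> (\<forall>A J. A \<subseteq> Atilde \<mu> k0 \<and> A \<noteq> {} \<and> asym_closed A \<and> J ` A \<subseteq> A \<and>
            asym_contractive \<mu> k0 A J \<longrightarrow> (\<exists>!S. S \<in> A \<and> S = J S))"
proof (intro conjI allI impI ballI)
  fix J S0
  assume "J ` Atilde \<mu> k0 \<subseteq> Atilde \<mu> k0 \<and> clinear_on (Atilde \<mu> k0) J \<and>
    (\<exists>C. \<forall>c. J (fsum \<mu> k0 c) = fsum2 \<mu> k0 (\<lambda>j p. c j * C j p))" and "S0 \<in> Atilde \<mu> k0"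
  then show "\<exists>!S. S \<in> Atilde \<mu> k0 \<and> S = (\<lambda>g. J S g + S0 g)"
    by (elim conjE exE) (rule affine_equation_unique_solution[OF assms])
next
  fix A J
  assume "A \<subseteq> Atilde \<mu> k0 \<and> A \<noteq> {} \<and> asym_closed A \<and> J ` A \<subseteq> A \<and> asym_contractive \<mu> k0 A J"
  then show "\<exists>!S. S \<in> A \<and> S = J S"
    by (elim conjE) (rule asym_contractive_unique_fixpoint[OF assms])
qed

end
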